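(* Let $X$ be a compact metric space and $\mathcal C,\mathcal D\subseteq\mathcal P(X)$. Let $P^\nu_{\mathcal C}$ and $P^\nu_{\mathcal D}$ be the optimal derivation sequences for $\mathcal C$ and $\mathcal D$, and let $Q^\nu$ be the optimal derivation sequence for $\{C\cap D: C\in\mathcal C, D\in\mathcal D\}$. Then for all ordinals $\nu,\mu$, $Q^{\nu\#\mu}\subseteq P^\nu_{\mathcal C}\cup P^\mu_{\mathcal D}$.
   Context: Optimal derivation sequence: for $\mathcal C\subseteq\mathcal P(X)$, define $P^0=X$, $P^{\nu+1}=P^\nu\setminus\bigcup\{U\subseteq X \text{ open}: P^\nu\cap U\subseteq C\text{ for some }C\in\mathcal C\}$, and $P^\lambda=\bigcap_{\nu<\lambda}P^\nu$ for limit $\lambda$. Natural (Hessenberg) sum: if $\alpha$ and $\beta$ have Cantor normal forms with exponents among $\xi_1>\dots>\xi_r$, $\alpha=\sum_i\omega^{\xi_i}m_i$, $\beta=\sum_i\omega^{\xi_i}n_i$ ($m_i,n_i\in\mathbb N$), then $\alpha\#\beta=\sum_i\omega^{\xi_i}(m_i+n_i)$. *)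

theory Defs
  imports "HOL-Analysis.Analysis"
begin

text \<open>One derivation step for a family C of subsets of the whole space
(the space X is the universe of the type):
  P' = P minus the union of all open U with P \<inter> U \<subseteq> C for some C in the family.\<close>

definition deriv_step :: "'a::topological_space set set \<Rightarrow> 'a set \<Rightarrow> 'a set" where
  "deriv_step \<C> P = P - \<Union>{U. open U \<and> (\<exists>C\<in>\<C>. P \<inter> U \<subseteq> C)}"

text \<open>Ordinals are represented as elements of an arbitrary well-ordered type 'o.\<close>

definition is_least_ord :: "'o::wellorder \<Rightarrow> bool" where
  "is_least_ord \<nu> \<longleftrightarrow> (\<forall>\<mu>. \<not> \<mu> < \<nu>)"

definition is_succ_ord :: "'o::wellorder \<Rightarrow> bool" where
  "is_succ_ord \<nu> \<longleftrightarrow> (\<exists>\<mu><\<nu>. \<forall>\<rho><\<nu>. \<rho> \<le> \<mu>)"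

definition ord_pred :: "'o::wellorder \<Rightarrow> 'o" where
  "ord_pred \<nu> = (THE \<mu>. \<mu> < \<nu> \<and> (\<forall>\<rho><\<nu>. \<rho> \<le> \<mu>))"

definition opt_deriv_seq :: "'a::topological_space set set \<Rightarrow> 'o::wellorder \<Rightarrow> 'a set" where
  "opt_deriv_seq \<C> = wfrec {(x, y). x < y}
     (\<lambda>F \<nu>. if is_least_ord \<nu> then UNIV
            else if is_succ_ord \<nu> then deriv_step \<C> (F (ord_pred \<nu>))
            else (\<Inter>\<mu>\<in>{\<mu>. \<mu> < \<nu>}. F \<mu>))"

text \<open>Ordinal exponentiation omega^xi is the order type of the finitely supported
  functions xi -> nat (here: functions 'o => nat vanishing outside {..<xi}),
  ordered by comparing values at the largest argument where they differ.\<close>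

definition omega_pow_carrier :: "'o::wellorder \<Rightarrow> ('o \<Rightarrow> nat) set" where
  "omega_pow_carrier \<xi> = {f. finite {x. f x \<noteq> 0} \<and> (\<forall>x. \<not> x < \<xi> \<longrightarrow> f x = 0)}"

definition omega_pow_less :: "('o::wellorder \<Rightarrow> nat) \<Rightarrow> ('o \<Rightarrow> nat) \<Rightarrow> bool" where
  "omega_pow_less f g \<longleftrightarrow> (\<exists>x. f x < g x \<and> (\<forall>y. x < y \<longrightarrow> f y = g y))"

text \<open>The ordinal sum  omega^xi_0 * m_0 + omega^xi_1 * m_1 + ... + omega^xi_(r-1) * m_(r-1),
  given by the list [(xi_0, m_0), ...], is the order type of the set of triples
  (i, j, f) with i < r, j < m_i, f in omega^xi_i, ordered lexicographically
  (ordinal sum over i, then m_i copies of omega^xi_i).\<close>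

definition cnf_carrier :: "('o::wellorder \<times> nat) list \<Rightarrow> (nat \<times> nat \<times> ('o \<Rightarrow> nat)) set" where
  "cnf_carrier ts = {(i, j, f). i < length ts \<and> j < snd (ts ! i) \<and> f \<in> omega_pow_carrier (fst (ts ! i))}"

definition cnf_less :: "(nat \<times> nat \<times> ('o::wellorder \<Rightarrow> nat)) \<Rightarrow> (nat \<times> nat \<times> ('o \<Rightarrow> nat)) \<Rightarrow> bool" where
  "cnf_less a b \<longleftrightarrow> (case a of (i, j, f) \<Rightarrow> case b of (i', j', f') \<Rightarrow>
      i < i' \<or> (i = i' \<and> (j < j' \<or> (j = j' \<and> omega_pow_less f f'))))"

text \<open>nu equals the ordinal expression given by ts: the initial segment {..<nu}
  is order-isomorphic to the carrier above.\<close>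

definition cnf_value :: "'o::wellorder \<Rightarrow> ('o \<times> nat) list \<Rightarrow> bool" where
  "cnf_value \<nu> ts \<longleftrightarrow> (\<exists>h. bij_betw h {..<\<nu>} (cnf_carrier ts) \<and>
      (\<forall>x\<in>{..<\<nu>}. \<forall>y\<in>{..<\<nu>}. x < y \<longrightarrow> cnf_less (h x) (h y)))"

definition is_natural_sum :: "'o::wellorder \<Rightarrow> 'o \<Rightarrow> 'o \<Rightarrow> bool" where
  "is_natural_sum \<nu> \<mu> \<rho> \<longleftrightarrow> (\<exists>xs :: ('o \<times> nat \<times> nat) list.
      sorted_wrt (>) (map fst xs) \<and>
      cnf_value \<nu> (map (\<lambda>(\<xi>, m, n). (\<xi>, m)) xs) \<and>
      cnf_value \<mu> (map (\<lambda>(\<xi>, m, n). (\<xi>, n)) xs) \<and>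
      cnf_value \<rho> (map (\<lambda>(\<xi>, m, n). (\<xi>, m + n)) xs))"

end

theory Submission
  imports Defs
begin

text \<open>Identify an ordinal below omega^xi_1 m_1 + ... + omega^xi_r m_r with the function sending
  each exponent to its Cantor coefficient, ordered by the last place where two such functions
  differ. Adding coefficient functions then gives a map \<phi> from \<nu> \<times> \<mu> into \<nu> # \<mu> that is
  strictly increasing in each argument.
  By induction along \<phi>(a, b) the derivation step of the intersected family \<Q> at stage \<phi>(a, b)
  removes everything that the \<C>-step at stage a and the \<D>-step at stage b both remove: a point
  of the \<Q>-stage outside the \<C>-stage a was already removed by a \<D>-step at an earlier
  \<phi>-stage, and symmetrically, so near a point removed by both steps the \<Q>-stage lies inside
  some C \<inter> D. A point in neither the \<C>-stage \<nu> nor the \<D>-stage \<mu> was removed at some stages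
  a < \<nu> and b < \<mu>, hence from \<Q> by stage \<phi>(a, b) + 1 \<le> \<nu> # \<mu>.\<close>

section \<open>Cantor normal forms and the natural sum\<close>

lemma omega_pow_lessI: "f x < g x \<Longrightarrow> (\<And>y. x < y \<Longrightarrow> f y = g y) \<Longrightarrow> omega_pow_less f g"
  unfolding omega_pow_less_def by blast

lemma omega_pow_less_irrefl: "\<not> omega_pow_less f f"
  by (simp add: omega_pow_less_def)

lemma omega_pow_less_trans:
  assumes "omega_pow_less f g" "omega_pow_less g h"
  shows "omega_pow_less f h"
proof -
  obtain x where x: "f x < g x" "\<And>y. x < y \<Longrightarrow> f y = g y"
    using assms(1) unfolding omega_pow_less_def by blast
  obtain z where z: "g z < h z" "\<And>y. z < y \<Longrightarrow> g y = h y"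
    using assms(2) unfolding omega_pow_less_def by blast
  show ?thesis
    unfolding omega_pow_less_def
    by (cases x z rule: linorder_cases) (use x z in \<open>metis order.strict_trans\<close>)+
qed

lemma omega_pow_less_asym: "omega_pow_less f g \<Longrightarrow> \<not> omega_pow_less g f"
  using omega_pow_less_trans omega_pow_less_irrefl by blast

lemma omega_pow_less_add_right:
  "omega_pow_less f f' \<Longrightarrow> omega_pow_less (\<lambda>x. f x + g x) (\<lambda>x. f' x + g x)"
  by (auto simp: omega_pow_less_def)

lemma omega_pow_less_add_left:
  "omega_pow_less f f' \<Longrightarrow> omega_pow_less (\<lambda>x. g x + f x) (\<lambda>x. g x + f' x)"
  by (auto simp: omega_pow_less_def)

abbreviation decreasing_exps :: "('o::wellorder \<times> 'b) list \<Rightarrow> bool" where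
  "decreasing_exps ts \<equiv> sorted_wrt (>) (map fst ts)"

lemma decreasing_exps_nth_less:
  assumes "decreasing_exps ts" "k < l" "l < length ts"
  shows "fst (ts ! l) < fst (ts ! k)"
  using sorted_wrt_nth_less[OF assms(1,2)] assms(2,3) by simp

lemma decreasing_exps_nth_le:
  "decreasing_exps ts \<Longrightarrow> k \<le> l \<Longrightarrow> l < length ts \<Longrightarrow> fst (ts ! l) \<le> fst (ts ! k)"
  using decreasing_exps_nth_less[of ts k l] by (cases "k = l") auto

lemma decreasing_exps_nth_eq_iff:
  "decreasing_exps ts \<Longrightarrow> k < length ts \<Longrightarrow> i < length ts \<Longrightarrow> fst (ts ! k) = fst (ts ! i) \<longleftrightarrow> k = i"
  using decreasing_exps_nth_less[of ts k i] decreasing_exps_nth_less[of ts i k]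
  by (cases k i rule: linorder_cases) auto

text \<open>For ts = [(xi_0, m_0), ...] with decreasing exponents, partial_coeff ts n is the
  coefficient function (exponent xi maps to its coefficient) of
  omega^xi_0 m_0 + ... + omega^xi_(n-1) m_(n-1).\<close>

definition partial_coeff :: "('o::wellorder \<times> nat) list \<Rightarrow> nat \<Rightarrow> 'o \<Rightarrow> nat" where
  "partial_coeff ts n x = (\<Sum>k<n. if fst (ts ! k) = x then snd (ts ! k) else 0)"

text \<open>The element (i, j, f) of cnf_carrier ts stands for the ordinal
  omega^xi_0 m_0 + ... + omega^xi_(i-1) m_(i-1) + omega^xi_i j + f, where f lists the
  coefficients of an ordinal below omega^xi_i; this is its coefficient function.\<close>

fun elem_coeff :: "('o::wellorder \<times> nat) list \<Rightarrow> nat \<times> nat \<times> ('o \<Rightarrow> nat) \<Rightarrow> 'o \<Rightarrow> nat" where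
  "elem_coeff ts (i, j, f) x = partial_coeff ts i x + (if fst (ts ! i) = x then j else 0) + f x"

definition coeffs_below :: "('o::wellorder \<times> nat) list \<Rightarrow> ('o \<Rightarrow> nat) set" where
  "coeffs_below ts = {F. finite {x. F x \<noteq> 0} \<and> omega_pow_less F (partial_coeff ts (length ts))}"

lemma partial_coeff_eq_0: "(\<And>k. k < n \<Longrightarrow> fst (ts ! k) \<noteq> x) \<Longrightarrow> partial_coeff ts n x = 0"
  unfolding partial_coeff_def by simp

lemma partial_coeff_neq_0E:
  assumes "partial_coeff ts n x \<noteq> 0"
  obtains k where "k < n" "fst (ts ! k) = x"
  using assms partial_coeff_eq_0 by metis

lemma partial_coeff_skip:
  assumes "n \<le> n'" "\<And>k. n \<le> k \<Longrightarrow> k < n' \<Longrightarrow> fst (ts ! k) \<noteq> x"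
  shows "partial_coeff ts n' x = partial_coeff ts n x"
  using assms by (induction n' rule: dec_induct) (auto simp: partial_coeff_def)

lemma partial_coeff_above:
  assumes "decreasing_exps ts" "i \<le> n" "n \<le> length ts" "i < length ts" "fst (ts ! i) < y"
  shows "partial_coeff ts n y = partial_coeff ts i y"
proof (rule partial_coeff_skip)
  fix k assume "i \<le> k" "k < n"
  then have "fst (ts ! k) \<le> fst (ts ! i)" using decreasing_exps_nth_le[OF assms(1)] assms(3) by simp
  then show "fst (ts ! k) \<noteq> y" using assms(5) by simp
qed (use assms in auto)

lemma partial_coeff_exp:
  assumes "decreasing_exps ts" "i < length ts" "n \<le> length ts"
  shows "partial_coeff ts n (fst (ts ! i)) = (if i < n then snd (ts ! i) else 0)"
proof -
  have "partial_coeff ts n (fst (ts ! i)) = (\<Sum>k<n. if k = i then snd (ts ! k) else 0)"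
    unfolding partial_coeff_def
    by (rule sum.cong) (use decreasing_exps_nth_eq_iff[OF assms(1) _ assms(2)] assms(3) in auto)
  then show ?thesis by simp
qed

lemma elem_coeff_above:
  "f \<in> omega_pow_carrier (fst (ts ! i)) \<Longrightarrow> fst (ts ! i) < y \<Longrightarrow> elem_coeff ts (i, j, f) y = partial_coeff ts i y"
  unfolding omega_pow_carrier_def by auto

lemma elem_coeff_exp:
  "decreasing_exps ts \<Longrightarrow> i < length ts \<Longrightarrow> f \<in> omega_pow_carrier (fst (ts ! i)) \<Longrightarrow>
   elem_coeff ts (i, j, f) (fst (ts ! i)) = j"
  unfolding omega_pow_carrier_def using partial_coeff_exp[of ts i i] by auto

lemma cnf_carrierD:
  "(i, j, f) \<in> cnf_carrier ts \<Longrightarrow> i < length ts \<and> j < snd (ts ! i) \<and> f \<in> omega_pow_carrier (fst (ts ! i))"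
  unfolding cnf_carrier_def by auto

lemma elem_coeff_strict_mono:
  assumes dec: "decreasing_exps ts" and t: "t \<in> cnf_carrier ts" and t': "t' \<in> cnf_carrier ts"
    and "cnf_less t t'"
  shows "omega_pow_less (elem_coeff ts t) (elem_coeff ts t')"
proof -
  obtain i j f i' j' f' where tt: "t = (i, j, f)" "t' = (i', j', f')" by (cases t, cases t') auto
  note c = cnf_carrierD[OF t[unfolded tt(1)]] and c' = cnf_carrierD[OF t'[unfolded tt(2)]]
  consider "i < i'" | "i' = i" "j < j'" | "i' = i" "j' = j" "omega_pow_less f f'"
    using \<open>cnf_less t t'\<close> unfolding tt cnf_less_def by auto
  then show ?thesis
  proof cases
    case 1
    have less: "fst (ts ! i') < fst (ts ! i)" using decreasing_exps_nth_less[OF dec 1] c' by simp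
    show ?thesis unfolding tt
    proof (rule omega_pow_lessI[of _ "fst (ts ! i)"])
      have "elem_coeff ts (i', j', f') (fst (ts ! i)) = partial_coeff ts i' (fst (ts ! i))"
        using elem_coeff_above c' less by blast
      also have "\<dots> = snd (ts ! i)" using partial_coeff_exp[OF dec, of i i'] c c' 1 by simp
      finally have "elem_coeff ts (i', j', f') (fst (ts ! i)) = snd (ts ! i)" .
      moreover have "elem_coeff ts (i, j, f) (fst (ts ! i)) = j" using elem_coeff_exp[OF dec] c by blast
      ultimately show "elem_coeff ts (i, j, f) (fst (ts ! i)) < elem_coeff ts (i', j', f') (fst (ts ! i))"
        using c by simp
    next
      fix y assume "fst (ts ! i) < y"
      then show "elem_coeff ts (i, j, f) y = elem_coeff ts (i', j', f') y"
        using elem_coeff_above[of f ts i y] elem_coeff_above[of f' ts i' y] less c c' 1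
          partial_coeff_above[OF dec, of i i' y] by auto
    qed
  next
    case 2
    then show ?thesis unfolding tt
      using elem_coeff_exp[OF dec, of i f j] elem_coeff_exp[OF dec, of i f' j'] c c'
        elem_coeff_above[of f ts i] elem_coeff_above[of f' ts i]
      by (intro omega_pow_lessI[of _ "fst (ts ! i)"]) auto
  next
    case 3
    then obtain x where "f x < f' x" "\<And>y. x < y \<Longrightarrow> f y = f' y"
      unfolding omega_pow_less_def by blast
    with 3 show ?thesis unfolding tt by (intro omega_pow_lessI[of _ x]) auto
  qed
qed

lemma elem_coeff_less_total:
  assumes dec: "decreasing_exps ts" and t: "(i, j, f) \<in> cnf_carrier ts"
  shows "omega_pow_less (elem_coeff ts (i, j, f)) (partial_coeff ts (length ts))"
proof (rule omega_pow_lessI[of _ "fst (ts ! i)"])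
  note c = cnf_carrierD[OF t]
  show "elem_coeff ts (i, j, f) (fst (ts ! i)) < partial_coeff ts (length ts) (fst (ts ! i))"
  proof -
    have "elem_coeff ts (i, j, f) (fst (ts ! i)) = j" using elem_coeff_exp[OF dec] c by blast
    then show ?thesis using partial_coeff_exp[OF dec, of i "length ts"] c by simp
  qed
  show "elem_coeff ts (i, j, f) y = partial_coeff ts (length ts) y" if "fst (ts ! i) < y" for y
    using elem_coeff_above[of f ts i] partial_coeff_above[OF dec, of i "length ts"] c that by auto
qed

lemma finite_support_elem_coeff:
  assumes "(i, j, f) \<in> cnf_carrier ts"
  shows "finite {x. elem_coeff ts (i, j, f) x \<noteq> 0}"
proof (rule finite_subset)
  show "{x. elem_coeff ts (i, j, f) x \<noteq> 0} \<subseteq> fst ` set ts \<union> {x. f x \<noteq> 0}"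
  proof
    fix x assume "x \<in> {x. elem_coeff ts (i, j, f) x \<noteq> 0}"
    then consider "partial_coeff ts i x \<noteq> 0" | "fst (ts ! i) = x" | "f x \<noteq> 0"
      by (auto split: if_splits)
    then show "x \<in> fst ` set ts \<union> {x. f x \<noteq> 0}"
    proof cases
      case 1
      then obtain k where "k < i" "fst (ts ! k) = x" by (rule partial_coeff_neq_0E)
      then show ?thesis using cnf_carrierD[OF assms] by (metis UnI1 image_eqI less_trans nth_mem)
    next
      case 2
      then show ?thesis using cnf_carrierD[OF assms] by (metis UnI1 image_eqI nth_mem)
    qed simp
  qed
  show "finite (fst ` set ts \<union> {x. f x \<noteq> 0})"
    using cnf_carrierD[OF assms] unfolding omega_pow_carrier_def by auto
qed

lemma coeffs_below_imp_elem_coeff_image: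
  assumes dec: "decreasing_exps ts" and "F \<in> coeffs_below ts"
  shows "F \<in> elem_coeff ts ` cnf_carrier ts"
proof -
  have fin: "finite {x. F x \<noteq> 0}" and "omega_pow_less F (partial_coeff ts (length ts))"
    using assms(2) unfolding coeffs_below_def by auto
  then obtain x where x: "F x < partial_coeff ts (length ts) x"
    "\<And>y. x < y \<Longrightarrow> F y = partial_coeff ts (length ts) y"
    unfolding omega_pow_less_def by blast
  then obtain i where i: "i < length ts" "fst (ts ! i) = x"
    by (metis not_less0 partial_coeff_neq_0E)
  define f where "f y = (if y < x then F y else 0)" for y
  have f: "f \<in> omega_pow_carrier (fst (ts ! i))"
    unfolding omega_pow_carrier_def f_def using i by (auto intro: finite_subset[OF _ fin])
  have "F x < snd (ts ! i)" using x(1) partial_coeff_exp[OF dec i(1), of "length ts"] i by simp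
  then have t: "(i, F x, f) \<in> cnf_carrier ts" unfolding cnf_carrier_def using i f by auto
  have "elem_coeff ts (i, F x, f) y = F y" for y
  proof (cases y x rule: linorder_cases)
    case less
    have "partial_coeff ts i y = 0"
      using decreasing_exps_nth_less[OF dec _ i(1)] i(2) less by (intro partial_coeff_eq_0) fastforce
    then show ?thesis using less i(2) by (simp add: f_def)
  next
    case equal
    then show ?thesis using elem_coeff_exp[OF dec i(1) f, of "F x"] i(2) by simp
  next
    case greater
    have "elem_coeff ts (i, F x, f) y = partial_coeff ts i y" using elem_coeff_above[OF f] greater i(2) by simp
    also have "\<dots> = partial_coeff ts (length ts) y"
      using partial_coeff_above[OF dec, of i "length ts" y] i greater by simp
    finally show ?thesis using x(2)[OF greater] by simp
  qed
  then show ?thesis using t by (metis image_eqI ext)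
qed

lemma elem_coeff_image:
  assumes "decreasing_exps ts"
  shows "elem_coeff ts ` cnf_carrier ts = coeffs_below ts"
proof
  show "elem_coeff ts ` cnf_carrier ts \<subseteq> coeffs_below ts"
  proof (rule image_subsetI)
    fix t assume t: "t \<in> cnf_carrier ts"
    obtain i j f where "t = (i, j, f)" by (cases t)
    then show "elem_coeff ts t \<in> coeffs_below ts"
      using finite_support_elem_coeff elem_coeff_less_total[OF assms] t
      unfolding coeffs_below_def by blast
  qed
  show "coeffs_below ts \<subseteq> elem_coeff ts ` cnf_carrier ts"
    using coeffs_below_imp_elem_coeff_image[OF assms] by blast
qed

lemma cnf_value_coeffsE:
  assumes "cnf_value \<nu> ts" "decreasing_exps ts"
  obtains g where "g ` {..<\<nu>} = coeffs_below ts"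
    and "\<And>a b. a < b \<Longrightarrow> b < \<nu> \<Longrightarrow> omega_pow_less (g a) (g b)"
proof -
  obtain h where h: "bij_betw h {..<\<nu>} (cnf_carrier ts)"
    and h_mono: "\<And>a b. a < \<nu> \<Longrightarrow> b < \<nu> \<Longrightarrow> a < b \<Longrightarrow> cnf_less (h a) (h b)"
    using assms(1) unfolding cnf_value_def by auto
  show ?thesis
  proof (rule that[of "elem_coeff ts \<circ> h"])
    show "(elem_coeff ts \<circ> h) ` {..<\<nu>} = coeffs_below ts"
      using elem_coeff_image[OF assms(2)] bij_betw_imp_surj_on[OF h] by (metis image_comp)
    show "omega_pow_less ((elem_coeff ts \<circ> h) a) ((elem_coeff ts \<circ> h) b)" if "a < b" "b < \<nu>" for a b
      using elem_coeff_strict_mono[OF assms(2)] h_mono[of a b] bij_betwE[OF h] that by auto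
  qed
qed

lemma inv_into_strict_mono:
  fixes g :: "'a::linorder \<Rightarrow> 'b"
  assumes mono: "\<And>a b. a \<in> A \<Longrightarrow> b \<in> A \<Longrightarrow> a < b \<Longrightarrow> R (g a) (g b)"
    and asym: "\<And>x y. R x y \<Longrightarrow> \<not> R y x"
    and "F \<in> g ` A" "F' \<in> g ` A" "R F F'"
  shows "inv_into A g F < inv_into A g F'"
proof (rule ccontr)
  assume "\<not> inv_into A g F < inv_into A g F'"
  then consider "inv_into A g F' < inv_into A g F" | "inv_into A g F' = inv_into A g F" by fastforce
  then show False
  proof cases
    case 1
    then have "R F' F"
      using mono[OF inv_into_into inv_into_into] f_inv_into_f assms(3,4) by metis
    then show False using asym \<open>R F F'\<close> by blast
  next
    case 2
    then have "F' = F" using f_inv_into_f assms(3,4) by metis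
    then show False using asym \<open>R F F'\<close> by blast
  qed
qed

lemma coeffs_below_add:
  assumes F: "F \<in> coeffs_below (map (\<lambda>(\<xi>, m, n). (\<xi>, m)) xs)"
    and G: "G \<in> coeffs_below (map (\<lambda>(\<xi>, m, n). (\<xi>, n)) xs)"
  shows "(\<lambda>y. F y + G y) \<in> coeffs_below (map (\<lambda>(\<xi>, m, n). (\<xi>, m + n)) xs)"
proof -
  define top1 where "top1 = partial_coeff (map (\<lambda>(\<xi>, m, n). (\<xi>, m)) xs) (length xs)"
  define top2 where "top2 = partial_coeff (map (\<lambda>(\<xi>, m, n). (\<xi>, n)) xs) (length xs)"
  have top: "partial_coeff (map (\<lambda>(\<xi>, m, n). (\<xi>, m + n)) xs) (length xs) = (\<lambda>y. top1 y + top2 y)"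
    unfolding top1_def top2_def partial_coeff_def sum.distrib[symmetric]
    by (rule ext, rule sum.cong) (auto simp: split_beta)
  have "{y. F y + G y \<noteq> 0} \<subseteq> {y. F y \<noteq> 0} \<union> {y. G y \<noteq> 0}" by auto
  then have "finite {y. F y + G y \<noteq> 0}"
    using F G unfolding coeffs_below_def by (auto intro: finite_subset)
  moreover have "omega_pow_less (\<lambda>y. F y + G y) (\<lambda>y. top1 y + G y)"
    using F unfolding top1_def coeffs_below_def by (auto intro: omega_pow_less_add_right)
  moreover have "omega_pow_less (\<lambda>y. top1 y + G y) (\<lambda>y. top1 y + top2 y)"
    using G unfolding top2_def coeffs_below_def by (auto intro: omega_pow_less_add_left)
  ultimately show ?thesis
    unfolding coeffs_below_def length_map top by (auto intro: omega_pow_less_trans)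
qed

lemma natural_sum_embeddingE:
  fixes \<nu> \<mu> \<rho> :: "'o::wellorder"
  assumes "is_natural_sum \<nu> \<mu> \<rho>"
  obtains \<phi> where "\<And>a a' b. a < a' \<Longrightarrow> a' < \<nu> \<Longrightarrow> b < \<mu> \<Longrightarrow> \<phi> a b < \<phi> a' b"
    and "\<And>a b b'. a < \<nu> \<Longrightarrow> b < b' \<Longrightarrow> b' < \<mu> \<Longrightarrow> \<phi> a b < \<phi> a b'"
    and "\<And>a b. a < \<nu> \<Longrightarrow> b < \<mu> \<Longrightarrow> \<phi> a b < \<rho>"
proof -
  obtain xs :: "('o \<times> nat \<times> nat) list" where xs: "decreasing_exps xs"
      "cnf_value \<nu> (map (\<lambda>(\<xi>, m, n). (\<xi>, m)) xs)"
      "cnf_value \<mu> (map (\<lambda>(\<xi>, m, n). (\<xi>, n)) xs)"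
      "cnf_value \<rho> (map (\<lambda>(\<xi>, m, n). (\<xi>, m + n)) xs)"
    using assms unfolding is_natural_sum_def by blast
  define t1 where "t1 = map (\<lambda>(\<xi>, m, n). (\<xi>, m)) xs"
  define t2 where "t2 = map (\<lambda>(\<xi>, m, n). (\<xi>, n)) xs"
  define t3 where "t3 = map (\<lambda>(\<xi>, m, n). (\<xi>, m + n)) xs"
  have dec: "decreasing_exps t1" "decreasing_exps t2" "decreasing_exps t3"
    unfolding t1_def t2_def t3_def using xs(1) by (simp_all add: comp_def split_beta)
  obtain g1 where
    g1: "g1 ` {..<\<nu>} = coeffs_below t1" "\<And>a b. a < b \<Longrightarrow> b < \<nu> \<Longrightarrow> omega_pow_less (g1 a) (g1 b)"
    using cnf_value_coeffsE[OF xs(2)[folded t1_def] dec(1)] by blast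
  obtain g2 where
    g2: "g2 ` {..<\<mu>} = coeffs_below t2" "\<And>a b. a < b \<Longrightarrow> b < \<mu> \<Longrightarrow> omega_pow_less (g2 a) (g2 b)"
    using cnf_value_coeffsE[OF xs(3)[folded t2_def] dec(2)] by blast
  obtain g3 where
    g3: "g3 ` {..<\<rho>} = coeffs_below t3" "\<And>a b. a < b \<Longrightarrow> b < \<rho> \<Longrightarrow> omega_pow_less (g3 a) (g3 b)"
    using cnf_value_coeffsE[OF xs(4)[folded t3_def] dec(3)] by blast
  define G where "G a b = (\<lambda>y. g1 a y + g2 b y)" for a b
  have G: "G a b \<in> g3 ` {..<\<rho>}" if "a < \<nu>" "b < \<mu>" for a b
    unfolding G_def g3(1) t3_def
    by (rule coeffs_below_add) (use g1(1) g2(1) that in \<open>auto simp: t1_def t2_def\<close>)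
  have g3_inv_mono: "inv_into {..<\<rho>} g3 F < inv_into {..<\<rho>} g3 F'"
    if "F \<in> g3 ` {..<\<rho>}" "F' \<in> g3 ` {..<\<rho>}" "omega_pow_less F F'" for F F'
    by (rule inv_into_strict_mono[where R = omega_pow_less, OF _ omega_pow_less_asym that])
      (use g3(2) in auto)
  show ?thesis
  proof (rule that[of "\<lambda>a b. inv_into {..<\<rho>} g3 (G a b)"])
    fix a a' b assume "a < a'" "a' < \<nu>" "b < \<mu>"
    then show "inv_into {..<\<rho>} g3 (G a b) < inv_into {..<\<rho>} g3 (G a' b)"
      using G g1(2) unfolding G_def by (intro g3_inv_mono omega_pow_less_add_right) auto
  next
    fix a b b' assume "a < \<nu>" "b < b'" "b' < \<mu>"
    then show "inv_into {..<\<rho>} g3 (G a b) < inv_into {..<\<rho>} g3 (G a b')"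
      using G g2(2) unfolding G_def by (intro g3_inv_mono omega_pow_less_add_left) auto
  next
    fix a b assume "a < \<nu>" "b < \<mu>"
    then show "inv_into {..<\<rho>} g3 (G a b) < \<rho>"
      using inv_into_into[OF G] by blast
  qed
qed

section \<open>Optimal derivation sequences\<close>

lemma ord_pred_greatest:
  assumes "is_succ_ord \<nu>"
  shows "ord_pred \<nu> < \<nu>" and "\<And>\<rho>. \<rho> < \<nu> \<Longrightarrow> \<rho> \<le> ord_pred \<nu>"
proof -
  have "\<exists>!\<pi>. \<pi> < \<nu> \<and> (\<forall>\<rho><\<nu>. \<rho> \<le> \<pi>)"
    using assms unfolding is_succ_ord_def by (metis antisym_conv)
  then have "ord_pred \<nu> < \<nu> \<and> (\<forall>\<rho><\<nu>. \<rho> \<le> ord_pred \<nu>)"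
    unfolding ord_pred_def by (rule theI')
  then show "ord_pred \<nu> < \<nu>" and "\<And>\<rho>. \<rho> < \<nu> \<Longrightarrow> \<rho> \<le> ord_pred \<nu>" by auto
qed

lemma opt_deriv_seq_unfold:
  "opt_deriv_seq \<C> \<nu> = (if is_least_ord \<nu> then UNIV
     else if is_succ_ord \<nu> then deriv_step \<C> (opt_deriv_seq \<C> (ord_pred \<nu>))
     else (\<Inter>\<mu>\<in>{..<\<nu>}. opt_deriv_seq \<C> \<mu>))"
  unfolding opt_deriv_seq_def
  by (subst wfrec[OF wf]) (auto simp: cut_apply ord_pred_greatest)

lemma opt_deriv_seq_least: "is_least_ord \<nu> \<Longrightarrow> opt_deriv_seq \<C> \<nu> = UNIV"
  by (subst opt_deriv_seq_unfold) simp

lemma opt_deriv_seq_succ: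
  "\<not> is_least_ord \<nu> \<Longrightarrow> is_succ_ord \<nu> \<Longrightarrow>
   opt_deriv_seq \<C> \<nu> = deriv_step \<C> (opt_deriv_seq \<C> (ord_pred \<nu>))"
  by (subst opt_deriv_seq_unfold) simp

lemma opt_deriv_seq_limit:
  "\<not> is_least_ord \<nu> \<Longrightarrow> \<not> is_succ_ord \<nu> \<Longrightarrow>
   opt_deriv_seq \<C> \<nu> = (\<Inter>\<mu>\<in>{..<\<nu>}. opt_deriv_seq \<C> \<mu>)"
  by (subst opt_deriv_seq_unfold) (simp add: lessThan_def)

lemma deriv_step_subset: "deriv_step \<C> P \<subseteq> P"
  unfolding deriv_step_def by auto

lemma deriv_step_mono:
  assumes "P \<subseteq> P'"
  shows "deriv_step \<C> P \<subseteq> deriv_step \<C> P'"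
proof
  fix x assume "x \<in> deriv_step \<C> P"
  then have "x \<in> P" and removed: "\<And>U C. open U \<Longrightarrow> C \<in> \<C> \<Longrightarrow> P \<inter> U \<subseteq> C \<Longrightarrow> x \<notin> U"
    unfolding deriv_step_def by auto
  have "x \<notin> U" if "open U" "C \<in> \<C>" "P' \<inter> U \<subseteq> C" for U C
    using removed[OF that(1,2)] that(3) assms by blast
  then show "x \<in> deriv_step \<C> P'"
    using \<open>x \<in> P\<close> assms unfolding deriv_step_def by auto
qed

lemma closed_deriv_step: "closed P \<Longrightarrow> closed (deriv_step \<C> P)"
  unfolding deriv_step_def by (intro closed_Diff open_Union) auto

lemma opt_deriv_seq_succ_eq_INT:
  assumes "\<not> is_least_ord \<nu>" "is_succ_ord \<nu>"
    and IH: "\<And>\<mu>. \<mu> < \<nu> \<Longrightarrow>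
      opt_deriv_seq \<C> \<mu> = (\<Inter>\<kappa>\<in>{..<\<mu>}. deriv_step \<C> (opt_deriv_seq \<C> \<kappa>))"
  shows "opt_deriv_seq \<C> \<nu> = (\<Inter>\<mu>\<in>{..<\<nu>}. deriv_step \<C> (opt_deriv_seq \<C> \<mu>))"
proof -
  define \<pi> where "\<pi> = ord_pred \<nu>"
  have \<pi>: "\<pi> < \<nu>" "\<And>\<rho>. \<rho> < \<nu> \<Longrightarrow> \<rho> \<le> \<pi>"
    unfolding \<pi>_def using ord_pred_greatest[OF assms(2)] by blast+
  have antimono: "opt_deriv_seq \<C> \<pi> \<subseteq> opt_deriv_seq \<C> \<mu>" if "\<mu> < \<nu>" for \<mu>
  proof -
    have "opt_deriv_seq \<C> \<pi> = (\<Inter>\<kappa>\<in>{..<\<pi>}. deriv_step \<C> (opt_deriv_seq \<C> \<kappa>))"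
      by (rule IH[OF \<pi>(1)])
    also have "\<dots> \<subseteq> (\<Inter>\<kappa>\<in>{..<\<mu>}. deriv_step \<C> (opt_deriv_seq \<C> \<kappa>))"
      using \<pi>(2)[OF that] by (intro INT_anti_mono) auto
    also have "\<dots> = opt_deriv_seq \<C> \<mu>"
      by (rule IH[OF that, symmetric])
    finally show ?thesis .
  qed
  have "opt_deriv_seq \<C> \<nu> = deriv_step \<C> (opt_deriv_seq \<C> \<pi>)"
    using assms(1,2) by (simp add: opt_deriv_seq_succ \<pi>_def)
  also have "\<dots> = (\<Inter>\<mu>\<in>{..<\<nu>}. deriv_step \<C> (opt_deriv_seq \<C> \<mu>))"
  proof
    show "deriv_step \<C> (opt_deriv_seq \<C> \<pi>) \<subseteq> (\<Inter>\<mu>\<in>{..<\<nu>}. deriv_step \<C> (opt_deriv_seq \<C> \<mu>))"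
      by (intro INT_greatest deriv_step_mono antimono) simp
    show "(\<Inter>\<mu>\<in>{..<\<nu>}. deriv_step \<C> (opt_deriv_seq \<C> \<mu>)) \<subseteq> deriv_step \<C> (opt_deriv_seq \<C> \<pi>)"
      using \<pi>(1) by (intro INT_lower) simp
  qed
  finally show ?thesis .
qed

lemma opt_deriv_seq_limit_eq_INT:
  assumes "\<not> is_least_ord \<nu>" "\<not> is_succ_ord \<nu>"
    and IH: "\<And>\<mu>. \<mu> < \<nu> \<Longrightarrow>
      opt_deriv_seq \<C> \<mu> = (\<Inter>\<kappa>\<in>{..<\<mu>}. deriv_step \<C> (opt_deriv_seq \<C> \<kappa>))"
  shows "opt_deriv_seq \<C> \<nu> = (\<Inter>\<mu>\<in>{..<\<nu>}. deriv_step \<C> (opt_deriv_seq \<C> \<mu>))"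
proof (unfold opt_deriv_seq_limit[OF assms(1,2)], intro equalityI subsetI)
  fix x assume x: "x \<in> (\<Inter>\<mu>\<in>{..<\<nu>}. opt_deriv_seq \<C> \<mu>)"
  show "x \<in> (\<Inter>\<mu>\<in>{..<\<nu>}. deriv_step \<C> (opt_deriv_seq \<C> \<mu>))"
  proof
    fix \<mu> assume "\<mu> \<in> {..<\<nu>}"
    then obtain \<kappa> where "\<mu> < \<kappa>" "\<kappa> < \<nu>"
      using assms(2) unfolding is_succ_ord_def by (meson lessThan_iff not_le)
    moreover have "x \<in> opt_deriv_seq \<C> \<kappa>" using x \<open>\<kappa> < \<nu>\<close> by simp
    ultimately show "x \<in> deriv_step \<C> (opt_deriv_seq \<C> \<mu>)"
      unfolding IH[OF \<open>\<kappa> < \<nu>\<close>] by blast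
  qed
next
  fix x assume x: "x \<in> (\<Inter>\<mu>\<in>{..<\<nu>}. deriv_step \<C> (opt_deriv_seq \<C> \<mu>))"
  show "x \<in> (\<Inter>\<mu>\<in>{..<\<nu>}. opt_deriv_seq \<C> \<mu>)"
  proof
    fix \<mu> assume "\<mu> \<in> {..<\<nu>}"
    then have \<mu>: "\<mu> < \<nu>" by simp
    show "x \<in> opt_deriv_seq \<C> \<mu>"
      unfolding IH[OF \<mu>] using x \<mu> by auto
  qed
qed

lemma opt_deriv_seq_eq_INT:
  "opt_deriv_seq \<C> \<nu> = (\<Inter>\<mu>\<in>{..<\<nu>}. deriv_step \<C> (opt_deriv_seq \<C> \<mu>))"
proof (induction \<nu> rule: less_induct)
  case (less \<nu>)
  consider "is_least_ord \<nu>" | "\<not> is_least_ord \<nu>" "is_succ_ord \<nu>"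
    | "\<not> is_least_ord \<nu>" "\<not> is_succ_ord \<nu>" by blast
  then show ?case
  proof cases
    case 1
    then show ?thesis by (auto simp: opt_deriv_seq_least is_least_ord_def)
  next
    case 2
    then show ?thesis using less.IH by (rule opt_deriv_seq_succ_eq_INT)
  next
    case 3
    then show ?thesis using less.IH by (rule opt_deriv_seq_limit_eq_INT)
  qed
qed

lemma closed_opt_deriv_seq: "closed (opt_deriv_seq \<C> \<nu>)"
proof (induction \<nu> rule: less_induct)
  case (less \<nu>)
  then show ?case
    by (subst opt_deriv_seq_eq_INT) (auto intro: closed_deriv_step)
qed

lemma opt_deriv_seq_subset_deriv_step:
  "\<mu> < \<nu> \<Longrightarrow> opt_deriv_seq \<C> \<nu> \<subseteq> deriv_step \<C> (opt_deriv_seq \<C> \<mu>)"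
  by (subst opt_deriv_seq_eq_INT) auto

lemma not_in_opt_deriv_seqE:
  assumes "x \<notin> opt_deriv_seq \<C> \<nu>"
  obtains \<mu> where "\<mu> < \<nu>" "x \<notin> deriv_step \<C> (opt_deriv_seq \<C> \<mu>)"
  using assms by (subst (asm) opt_deriv_seq_eq_INT) auto

lemma deriv_step_Int_subset:
  fixes \<C> \<D> \<Q> :: "'a::topological_space set set"
  assumes "closed P" "closed R"
    and \<Q>: "\<And>C D. C \<in> \<C> \<Longrightarrow> D \<in> \<D> \<Longrightarrow> C \<inter> D \<in> \<Q>"
    and QP: "Q \<subseteq> P \<union> deriv_step \<D> R" and QR: "Q \<subseteq> R \<union> deriv_step \<C> P"
  shows "deriv_step \<Q> Q \<subseteq> deriv_step \<C> P \<union> deriv_step \<D> R"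
proof
  fix y assume y: "y \<in> deriv_step \<Q> Q"
  define E where "E = deriv_step \<C> P \<union> deriv_step \<D> R"
  show "y \<in> E"
  proof (rule ccontr)
    assume "y \<notin> E"
    have "y \<in> Q" using y deriv_step_subset by blast
    then have "y \<in> P" "y \<in> R" using QP QR \<open>y \<notin> E\<close> by (auto simp: E_def)
    obtain U C where U: "open U" "y \<in> U" "C \<in> \<C>" "P \<inter> U \<subseteq> C"
      using \<open>y \<in> P\<close> \<open>y \<notin> E\<close> unfolding E_def deriv_step_def by auto
    obtain V D where V: "open V" "y \<in> V" "D \<in> \<D>" "R \<inter> V \<subseteq> D"
      using \<open>y \<in> R\<close> \<open>y \<notin> E\<close> unfolding E_def deriv_step_def by auto
    have "open (U \<inter> V - E)"
      using U(1) V(1) assms(1,2) unfolding E_def by (intro open_Diff open_Int closed_Un closed_deriv_step)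
    moreover have "Q \<inter> (U \<inter> V - E) \<subseteq> C \<inter> D"
      using QP QR U(4) V(4) unfolding E_def by blast
    ultimately have "y \<notin> deriv_step \<Q> Q"
      using U(2) V(2) \<open>y \<notin> E\<close> \<Q>[OF U(3) V(3)] unfolding deriv_step_def by blast
    then show False using y by contradiction
  qed
qed

lemma opt_deriv_seq_subset_Un_deriv_step:
  assumes step: "\<And>a'. a' < a \<Longrightarrow>
      deriv_step \<Q> (opt_deriv_seq \<Q> (\<psi> a')) \<subseteq> deriv_step \<C> (opt_deriv_seq \<C> a') \<union> E"
    and less: "\<And>a'. a' < a \<Longrightarrow> \<psi> a' < c"
  shows "opt_deriv_seq \<Q> c \<subseteq> opt_deriv_seq \<C> a \<union> E"
proof
  fix z assume z: "z \<in> opt_deriv_seq \<Q> c"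
  show "z \<in> opt_deriv_seq \<C> a \<union> E"
  proof (rule ccontr)
    assume "z \<notin> opt_deriv_seq \<C> a \<union> E"
    then obtain a' where a': "a' < a" "z \<notin> deriv_step \<C> (opt_deriv_seq \<C> a')" "z \<notin> E"
      by (auto elim: not_in_opt_deriv_seqE)
    have "z \<in> deriv_step \<Q> (opt_deriv_seq \<Q> (\<psi> a'))"
      using z opt_deriv_seq_subset_deriv_step[OF less[OF a'(1)]] by blast
    then show False using step[OF a'(1)] a'(2,3) by blast
  qed
qed

lemma deriv_step_opt_deriv_seq_Int_subset:
  fixes \<C> \<D> \<Q> :: "'a::topological_space set set" and \<phi> :: "'o::wellorder \<Rightarrow> 'o \<Rightarrow> 'o"
  assumes mono_left: "\<And>a a' b. a < a' \<Longrightarrow> a' < \<nu> \<Longrightarrow> b < \<mu> \<Longrightarrow> \<phi> a b < \<phi> a' b"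
    and mono_right: "\<And>a b b'. a < \<nu> \<Longrightarrow> b < b' \<Longrightarrow> b' < \<mu> \<Longrightarrow> \<phi> a b < \<phi> a b'"
    and \<Q>: "\<And>C D. C \<in> \<C> \<Longrightarrow> D \<in> \<D> \<Longrightarrow> C \<inter> D \<in> \<Q>"
    and "a < \<nu>" "b < \<mu>"
  shows "deriv_step \<Q> (opt_deriv_seq \<Q> (\<phi> a b))
           \<subseteq> deriv_step \<C> (opt_deriv_seq \<C> a) \<union> deriv_step \<D> (opt_deriv_seq \<D> b)"
  using assms(4,5)
proof (induction "\<phi> a b" arbitrary: a b rule: less_induct)
  case less
  show ?case
  proof (rule deriv_step_Int_subset[OF closed_opt_deriv_seq closed_opt_deriv_seq \<Q>])
    show "opt_deriv_seq \<Q> (\<phi> a b) \<subseteq> opt_deriv_seq \<C> a \<union> deriv_step \<D> (opt_deriv_seq \<D> b)"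
    proof (rule opt_deriv_seq_subset_Un_deriv_step[where \<psi> = "\<lambda>a'. \<phi> a' b"])
      fix a' assume "a' < a"
      then show "\<phi> a' b < \<phi> a b" using mono_left less.prems by blast
      then show "deriv_step \<Q> (opt_deriv_seq \<Q> (\<phi> a' b))
          \<subseteq> deriv_step \<C> (opt_deriv_seq \<C> a') \<union> deriv_step \<D> (opt_deriv_seq \<D> b)"
        using \<open>a' < a\<close> less by (meson order.strict_trans)
    qed
    show "opt_deriv_seq \<Q> (\<phi> a b) \<subseteq> opt_deriv_seq \<D> b \<union> deriv_step \<C> (opt_deriv_seq \<C> a)"
    proof (rule opt_deriv_seq_subset_Un_deriv_step[where \<psi> = "\<lambda>b'. \<phi> a b'"])
      fix b' assume "b' < b"
      then show "\<phi> a b' < \<phi> a b" using mono_right less.prems by blast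
      then show "deriv_step \<Q> (opt_deriv_seq \<Q> (\<phi> a b'))
          \<subseteq> deriv_step \<D> (opt_deriv_seq \<D> b') \<union> deriv_step \<C> (opt_deriv_seq \<C> a)"
        using \<open>b' < b\<close> less by (metis Un_commute order.strict_trans)
    qed
  qed
qed

lemma opt_deriv_seq_Int_subset:
  fixes \<C> \<D> :: "'a::topological_space set set" and \<phi> :: "'o::wellorder \<Rightarrow> 'o \<Rightarrow> 'o"
  assumes mono_left: "\<And>a a' b. a < a' \<Longrightarrow> a' < \<nu> \<Longrightarrow> b < \<mu> \<Longrightarrow> \<phi> a b < \<phi> a' b"
    and mono_right: "\<And>a b b'. a < \<nu> \<Longrightarrow> b < b' \<Longrightarrow> b' < \<mu> \<Longrightarrow> \<phi> a b < \<phi> a b'"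
    and bounded: "\<And>a b. a < \<nu> \<Longrightarrow> b < \<mu> \<Longrightarrow> \<phi> a b < \<rho>"
  shows "opt_deriv_seq {C \<inter> D | C D. C \<in> \<C> \<and> D \<in> \<D>} \<rho>
           \<subseteq> opt_deriv_seq \<C> \<nu> \<union> opt_deriv_seq \<D> \<mu>"
proof
  fix x assume x: "x \<in> opt_deriv_seq {C \<inter> D | C D. C \<in> \<C> \<and> D \<in> \<D>} \<rho>"
  show "x \<in> opt_deriv_seq \<C> \<nu> \<union> opt_deriv_seq \<D> \<mu>"
  proof (rule ccontr)
    assume "x \<notin> opt_deriv_seq \<C> \<nu> \<union> opt_deriv_seq \<D> \<mu>"
    then obtain a b where "a < \<nu>" "x \<notin> deriv_step \<C> (opt_deriv_seq \<C> a)"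
      and "b < \<mu>" "x \<notin> deriv_step \<D> (opt_deriv_seq \<D> b)"
      by (auto elim!: not_in_opt_deriv_seqE)
    moreover have "x \<in> deriv_step {C \<inter> D | C D. C \<in> \<C> \<and> D \<in> \<D>}
        (opt_deriv_seq {C \<inter> D | C D. C \<in> \<C> \<and> D \<in> \<D>} (\<phi> a b))"
      using x opt_deriv_seq_subset_deriv_step[OF bounded[OF \<open>a < \<nu>\<close> \<open>b < \<mu>\<close>]] by blast
    moreover have "deriv_step {C \<inter> D | C D. C \<in> \<C> \<and> D \<in> \<D>}
        (opt_deriv_seq {C \<inter> D | C D. C \<in> \<C> \<and> D \<in> \<D>} (\<phi> a b))
        \<subseteq> deriv_step \<C> (opt_deriv_seq \<C> a) \<union> deriv_step \<D> (opt_deriv_seq \<D> b)"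
      by (rule deriv_step_opt_deriv_seq_Int_subset[OF mono_left mono_right _ \<open>a < \<nu>\<close> \<open>b < \<mu>\<close>])
        auto
    ultimately show False by blast
  qed
qed

theorem mainTheorem16:
  fixes \<C> \<D> :: "'a::metric_space set set"
    and \<nu> \<mu> \<rho> :: "'o::wellorder"
  assumes "compact (UNIV :: 'a set)"
    and "is_natural_sum \<nu> \<mu> \<rho>"
  shows "opt_deriv_seq {C \<inter> D | C D. C \<in> \<C> \<and> D \<in> \<D>} \<rho>
           \<subseteq> opt_deriv_seq \<C> \<nu> \<union> opt_deriv_seq \<D> \<mu>"
proof (rule natural_sum_embeddingE[OF assms(2)])
  fix \<phi> :: "'o \<Rightarrow> 'o \<Rightarrow> 'o"
  assume "\<And>a a' b. a < a' \<Longrightarrow> a' < \<nu> \<Longrightarrow> b < \<mu> \<Longrightarrow> \<phi> a b < \<phi> a' b"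
    and "\<And>a b b'. a < \<nu> \<Longrightarrow> b < b' \<Longrightarrow> b' < \<mu> \<Longrightarrow> \<phi> a b < \<phi> a b'"
    and "\<And>a b. a < \<nu> \<Longrightarrow> b < \<mu> \<Longrightarrow> \<phi> a b < \<rho>"
  then show ?thesis by (rule opt_deriv_seq_Int_subset)
qed

end
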